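(* Let $P$ be any transition matrix on the finite set $S$ for which $\pi$ is a stationary distribution, i.e. $\pi(y)=\sum_x\pi(x)P(x,y)$ for all $y$. Let $\pi_{\max}=\max_x\pi(x)$. Then $\mathrm{trace}(P)=\sum_x P(x,x)\ge\max\big(0,(2\pi_{\max}-1)/\pi_{\max}\big)$. Furthermore, any $P$ attaining this minimum value has at most one non-zero diagonal entry, and any such non-zero diagonal entry is $P(x^*,x^* )$ for a state $x^*$ with $\pi(x^* )=\pi_{\max}>1/2$.
   Context: $S$ is a finite set, and $\pi$ is a probability distribution on $S$ with $\pi(x)>0$ for all $x$. A transition matrix has nonnegative entries with rows summing to $1$. *)

theory Defs
  imports Main "HOL-Analysis.Analysis"
begin

definition prob_dist_on :: "'a set \<Rightarrow> ('a \<Rightarrow> real) \<Rightarrow> bool" where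
  "prob_dist_on S \<pi> \<longleftrightarrow> (\<forall>x\<in>S. \<pi> x > 0) \<and> (\<Sum>x\<in>S. \<pi> x) = 1"

definition transition_matrix :: "'a set \<Rightarrow> ('a \<Rightarrow> 'a \<Rightarrow> real) \<Rightarrow> bool" where
  "transition_matrix S P \<longleftrightarrow> (\<forall>x\<in>S. \<forall>y\<in>S. P x y \<ge> 0) \<and> (\<forall>x\<in>S. (\<Sum>y\<in>S. P x y) = 1)"

definition stationary :: "'a set \<Rightarrow> ('a \<Rightarrow> real) \<Rightarrow> ('a \<Rightarrow> 'a \<Rightarrow> real) \<Rightarrow> bool" where
  "stationary S \<pi> P \<longleftrightarrow> (\<forall>y\<in>S. \<pi> y = (\<Sum>x\<in>S. \<pi> x * P x y))"

definition trace_on :: "'a set \<Rightarrow> ('a \<Rightarrow> 'a \<Rightarrow> real) \<Rightarrow> real" where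
  "trace_on S P = (\<Sum>x\<in>S. P x x)"

end

theory Submission
  imports Defs
begin

(* At a state z of maximal mass, stationarity gives
   pi z = pi z P(z,z) + sum_{x ~= z} pi x P(x,z) <= pi z P(z,z) + (1 - pi z),
   so P(z,z) >= (2 pi z - 1) / pi z.  The trace dominates every diagonal entry and is
   nonnegative; equality with the bound forces all diagonal entries except possibly
   P(z,z) to vanish, and P(z,z) itself can only be nonzero when pi z > 1/2. *)

lemma transition_matrix_le_one:
  assumes "finite S" "transition_matrix S P" "x \<in> S" "y \<in> S"
  shows "P x y \<le> 1"
proof -
  have "P x y = (\<Sum>y\<in>{y}. P x y)" by simp
  also have "\<dots> \<le> (\<Sum>y\<in>S. P x y)"
    using assms by (intro sum_mono2) (auto simp: transition_matrix_def)
  finally show ?thesis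
    using assms by (simp add: transition_matrix_def)
qed

lemma stationary_diagonal_lower_bound:
  assumes "finite S" "prob_dist_on S \<pi>" "transition_matrix S P" "stationary S \<pi> P" "z \<in> S"
  shows "2 * \<pi> z - 1 \<le> \<pi> z * P z z"
proof -
  have \<pi>_nonneg: "\<pi> x \<ge> 0" if "x \<in> S" for x
    using assms(2) that by (auto simp: prob_dist_on_def less_imp_le)
  have "\<pi> z = (\<Sum>x\<in>S. \<pi> x * P x z)"
    using assms(4,5) by (simp add: stationary_def)
  also have "\<dots> = \<pi> z * P z z + (\<Sum>x\<in>S-{z}. \<pi> x * P x z)"
    using assms(1,5) by (simp add: sum.remove)
  also have "(\<Sum>x\<in>S-{z}. \<pi> x * P x z) \<le> (\<Sum>x\<in>S-{z}. \<pi> x)"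
    using assms \<pi>_nonneg transition_matrix_le_one[OF assms(1,3)]
    by (intro sum_mono) (simp add: mult_left_le)
  also have "(\<Sum>x\<in>S-{z}. \<pi> x) = 1 - \<pi> z"
    using assms(1,2,5) by (simp add: sum_diff1 prob_dist_on_def)
  finally show ?thesis by simp
qed

lemma trace_on_nonneg:
  assumes "transition_matrix S P"
  shows "trace_on S P \<ge> 0"
  using assms by (auto simp: trace_on_def transition_matrix_def intro: sum_nonneg)

lemma trace_on_eq_0_iff:
  assumes "finite S" "transition_matrix S P"
  shows "trace_on S P = 0 \<longleftrightarrow> (\<forall>x\<in>S. P x x = 0)"
  using assms by (simp add: trace_on_def transition_matrix_def sum_nonneg_eq_0_iff)

lemma trace_on_remove:
  assumes "finite S" "z \<in> S"
  shows "trace_on S P = P z z + trace_on (S - {z}) P"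
  using assms by (simp add: trace_on_def sum.remove)

lemma diagonal_le_trace_on:
  assumes "finite S" "transition_matrix S P" "z \<in> S"
  shows "P z z \<le> trace_on S P"
proof -
  have "trace_on (S - {z}) P \<ge> 0"
    using assms(2) by (auto simp: trace_on_def transition_matrix_def intro: sum_nonneg)
  then show ?thesis
    using trace_on_remove[OF assms(1,3)] by simp
qed

lemma trace_on_eq_diagonal_iff:
  assumes "finite S" "transition_matrix S P" "z \<in> S"
  shows "trace_on S P = P z z \<longleftrightarrow> (\<forall>x\<in>S-{z}. P x x = 0)"
proof -
  have "trace_on (S - {z}) P = 0 \<longleftrightarrow> (\<forall>x\<in>S-{z}. P x x = 0)"
    using assms(1,2) unfolding trace_on_def transition_matrix_def
    by (intro sum_nonneg_eq_0_iff) auto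
  then show ?thesis
    using trace_on_remove[OF assms(1,3)] by simp
qed

theorem lemma4:
  fixes S :: "'a set" and \<pi> :: "'a \<Rightarrow> real" and P :: "'a \<Rightarrow> 'a \<Rightarrow> real"
  assumes "finite S" and "S \<noteq> {}"
    and "prob_dist_on S \<pi>"
    and "transition_matrix S P"
    and "stationary S \<pi> P"
  defines "\<pi>max \<equiv> Max (\<pi> ` S)"
  shows "trace_on S P \<ge> max 0 ((2 * \<pi>max - 1) / \<pi>max)
         \<and> (trace_on S P = max 0 ((2 * \<pi>max - 1) / \<pi>max) \<longrightarrow>
           (\<forall>x\<in>S. \<forall>y\<in>S. P x x \<noteq> 0 \<and> P y y \<noteq> 0 \<longrightarrow> x = y)
         \<and> (\<forall>x\<in>S. P x x \<noteq> 0 \<longrightarrow> \<pi> x = \<pi>max \<and> \<pi>max > 1/2))"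
proof -
  obtain z where z: "z \<in> S" "\<pi> z = \<pi>max"
    using Max_in[of "\<pi> ` S"] assms(1,2) unfolding \<pi>max_def by fastforce
  have "\<pi>max > 0"
    using assms(3) z by (auto simp: prob_dist_on_def)
  then have bound: "(2 * \<pi>max - 1) / \<pi>max \<le> P z z"
    using stationary_diagonal_lower_bound[OF assms(1,3,4,5) z(1)] z(2)
    by (simp add: divide_le_eq mult.commute)
  have trace_ge: "P z z \<le> trace_on S P"
    using diagonal_le_trace_on[OF assms(1,4) z(1)] .
  moreover have "\<forall>x\<in>S. \<forall>y\<in>S. P x x \<noteq> 0 \<and> P y y \<noteq> 0 \<longrightarrow> x = y"
    and "\<forall>x\<in>S. P x x \<noteq> 0 \<longrightarrow> \<pi> x = \<pi>max \<and> \<pi>max > 1/2"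
    if tight: "trace_on S P = max 0 ((2 * \<pi>max - 1) / \<pi>max)"
  proof -
    have "\<forall>x\<in>S. P x x \<noteq> 0 \<longrightarrow> x = z \<and> \<pi>max > 1/2"
    proof (cases "\<pi>max > 1/2")
      case True
      with \<open>\<pi>max > 0\<close> tight bound trace_ge have "trace_on S P = P z z" by simp
      with True show ?thesis
        using trace_on_eq_diagonal_iff[OF assms(1,4) z(1)] by blast
    next
      case False
      with \<open>\<pi>max > 0\<close> tight have "trace_on S P = 0" by (simp add: divide_le_0_iff)
      then show ?thesis
        using trace_on_eq_0_iff[OF assms(1,4)] by blast
    qed
    with z(2) show "\<forall>x\<in>S. \<forall>y\<in>S. P x x \<noteq> 0 \<and> P y y \<noteq> 0 \<longrightarrow> x = y"
      and "\<forall>x\<in>S. P x x \<noteq> 0 \<longrightarrow> \<pi> x = \<pi>max \<and> \<pi>max > 1/2" by auto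
  qed
  ultimately show ?thesis
    using bound trace_on_nonneg[OF assms(4)] by auto
qed

end
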